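(* For every graph $G$ and every integer $r\ge 2$, $$\mathrm{glm}(G)\le \mathrm{had}(G\square K_2)\le 3\,\mathrm{had}_r(G),$$ and if $r$ is even then $$\mathrm{glm}(G)\le \mathrm{had}(G\square K_2)\le 2\,\mathrm{had}_r(G)\le 2\,\mathrm{had}_f(G).$$
   Context: $\mathrm{had}(H)$ is the largest $t$ such that $K_t$ is a minor of $H$. $G\square K_2$ is the Cartesian product: two disjoint copies of $G$ with an edge between each pair of corresponding vertices. A grid-like-minor of order $t$ in $G$ is a set $\mathcal P$ of paths in $G$ whose intersection graph (vertices $\mathcal P$, two paths adjacent if they share a vertex) is bipartite and contains a $K_t$-minor; $\mathrm{glm}(G)$ is the maximum order of a grid-like-minor of $G$. Two subgraphs touch if they share a vertex or an edge joins them; a bramble is a set of pairwise touching connected subgraphs. The fractional Hadwiger number $\mathrm{had}_f(G)$ is the maximum $h$ for which there is a bramble $\mathcal B$ in $G$ and a weight function $w:\mathcal B\to\mathbb R_{\ge0}$ with $h=\sum_{X\in\mathcal B}w(X)$ and, for each vertex $v$, the total weight of elements of $\mathcal B$ containing $v$ at most $1$. For a positive integer $r$, $\mathrm{had}_r(G)$ is defined identically except that all weights must be multiples of $\frac1r$. *)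

theory Defs
  imports Main Complex_Main
begin

definition graph :: "'a set \<Rightarrow> ('a \<times> 'a) set \<Rightarrow> bool" where
  "graph V E \<longleftrightarrow> finite V \<and> E \<subseteq> V \<times> V \<and> sym E \<and> (\<forall>v. (v, v) \<notin> E)"

definition connected_set :: "('a \<times> 'a) set \<Rightarrow> 'a set \<Rightarrow> bool" where
  "connected_set E S \<longleftrightarrow> S \<noteq> {} \<and> (\<forall>x\<in>S. \<forall>y\<in>S. (x, y) \<in> (E \<inter> (S \<times> S))\<^sup>*)"

definition has_K_minor :: "'a set \<Rightarrow> ('a \<times> 'a) set \<Rightarrow> nat \<Rightarrow> bool" where
  "has_K_minor V E t \<longleftrightarrow> (\<exists>B :: nat \<Rightarrow> 'a set.
      (\<forall>i<t. B i \<subseteq> V \<and> connected_set E (B i)) \<and>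
      (\<forall>i<t. \<forall>j<t. i \<noteq> j \<longrightarrow> B i \<inter> B j = {}) \<and>
      (\<forall>i<t. \<forall>j<t. i \<noteq> j \<longrightarrow> (\<exists>x\<in>B i. \<exists>y\<in>B j. (x, y) \<in> E)))"

definition had :: "'a set \<Rightarrow> ('a \<times> 'a) set \<Rightarrow> nat" where
  "had V E = Max {t. has_K_minor V E t}"

definition prodK2_V :: "'a set \<Rightarrow> ('a \<times> bool) set" where
  "prodK2_V V = V \<times> UNIV"

definition prodK2_E :: "'a set \<Rightarrow> ('a \<times> 'a) set \<Rightarrow> (('a \<times> bool) \<times> ('a \<times> bool)) set" where
  "prodK2_E V E = {((u, b), (v, b)) | u v b. (u, v) \<in> E}
                 \<union> {((u, b), (u, \<not> b)) | u b. u \<in> V}"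

definition path_list :: "'a set \<Rightarrow> ('a \<times> 'a) set \<Rightarrow> 'a list \<Rightarrow> bool" where
  "path_list V E xs \<longleftrightarrow> xs \<noteq> [] \<and> distinct xs \<and> set xs \<subseteq> V \<and>
     (\<forall>i. Suc i < length xs \<longrightarrow> (xs ! i, xs ! Suc i) \<in> E)"

definition path_sg :: "'a list \<Rightarrow> 'a set \<times> ('a \<times> 'a) set" where
  "path_sg xs = (set xs,
     {(xs ! i, xs ! Suc i) | i. Suc i < length xs} \<union> {(xs ! Suc i, xs ! i) | i. Suc i < length xs})"

definition is_path :: "'a set \<Rightarrow> ('a \<times> 'a) set \<Rightarrow> 'a set \<times> ('a \<times> 'a) set \<Rightarrow> bool" where
  "is_path V E p \<longleftrightarrow> (\<exists>xs. path_list V E xs \<and> p = path_sg xs)"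

definition inter_E :: "('a set \<times> ('a \<times> 'a) set) set \<Rightarrow>
    (('a set \<times> ('a \<times> 'a) set) \<times> ('a set \<times> ('a \<times> 'a) set)) set" where
  "inter_E P = {(p, q). p \<in> P \<and> q \<in> P \<and> p \<noteq> q \<and> fst p \<inter> fst q \<noteq> {}}"

definition bipartite :: "'b set \<Rightarrow> ('b \<times> 'b) set \<Rightarrow> bool" where
  "bipartite V E \<longleftrightarrow> (\<exists>A. A \<subseteq> V \<and> (\<forall>(x, y)\<in>E. x \<in> A \<longleftrightarrow> y \<notin> A))"

definition grid_like_minor :: "'a set \<Rightarrow> ('a \<times> 'a) set \<Rightarrow> ('a set \<times> ('a \<times> 'a) set) set \<Rightarrow> nat \<Rightarrow> bool" where
  "grid_like_minor V E P t \<longleftrightarrow> (\<forall>p\<in>P. is_path V E p) \<and>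
      bipartite P (inter_E P) \<and> has_K_minor P (inter_E P) t"

definition glm :: "'a set \<Rightarrow> ('a \<times> 'a) set \<Rightarrow> nat" where
  "glm V E = Max {t. \<exists>P. grid_like_minor V E P t}"

definition conn_subgraph :: "'a set \<Rightarrow> ('a \<times> 'a) set \<Rightarrow> 'a set \<times> ('a \<times> 'a) set \<Rightarrow> bool" where
  "conn_subgraph V E X \<longleftrightarrow> (case X of (S, F) \<Rightarrow>
     S \<noteq> {} \<and> S \<subseteq> V \<and> F \<subseteq> E \<inter> (S \<times> S) \<and> sym F \<and> (\<forall>x\<in>S. \<forall>y\<in>S. (x, y) \<in> F\<^sup>*))"

definition touch :: "('a \<times> 'a) set \<Rightarrow> 'a set \<times> ('a \<times> 'a) set \<Rightarrow> 'a set \<times> ('a \<times> 'a) set \<Rightarrow> bool" where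
  "touch E X Y \<longleftrightarrow> fst X \<inter> fst Y \<noteq> {} \<or> (\<exists>x\<in>fst X. \<exists>y\<in>fst Y. (x, y) \<in> E)"

definition bramble :: "'a set \<Rightarrow> ('a \<times> 'a) set \<Rightarrow> ('a set \<times> ('a \<times> 'a) set) set \<Rightarrow> bool" where
  "bramble V E \<B> \<longleftrightarrow> (\<forall>X\<in>\<B>. conn_subgraph V E X) \<and> (\<forall>X\<in>\<B>. \<forall>Y\<in>\<B>. touch E X Y)"

definition admissible_weight :: "'a set \<Rightarrow> ('a set \<times> ('a \<times> 'a) set) set \<Rightarrow>
     ('a set \<times> ('a \<times> 'a) set \<Rightarrow> real) \<Rightarrow> bool" where
  "admissible_weight V \<B> w \<longleftrightarrow> finite \<B> \<and> (\<forall>X\<in>\<B>. w X \<ge> 0) \<and>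
     (\<forall>v\<in>V. (\<Sum>X\<in>{X\<in>\<B>. v \<in> fst X}. w X) \<le> 1)"

definition had_f :: "'a set \<Rightarrow> ('a \<times> 'a) set \<Rightarrow> real" where
  "had_f V E = Sup {h. \<exists>\<B> w. bramble V E \<B> \<and> admissible_weight V \<B> w \<and> h = (\<Sum>X\<in>\<B>. w X)}"

definition had_r :: "nat \<Rightarrow> 'a set \<Rightarrow> ('a \<times> 'a) set \<Rightarrow> real" where
  "had_r r V E = Sup {h. \<exists>\<B> w. bramble V E \<B> \<and> admissible_weight V \<B> w \<and>
       (\<forall>X\<in>\<B>. \<exists>k::nat. w X = real k / real r) \<and> h = (\<Sum>X\<in>\<B>. w X)}"

end

theory Submission
  imports Defs
begin

(* A grid-like minor lifts to a clique minor of G \<box> K2: the paths of one colour class of the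
   bipartite intersection graph go into one copy of G, the others into the second copy. Paths of
   the same class are vertex-disjoint, and intersecting paths of different classes are joined by
   a rung, so lifted branch sets stay disjoint, connected and pairwise adjacent.
   Conversely, the projections onto G of the t branch sets of a clique minor of G \<box> K2 form a
   bramble in which every vertex lies in at most two members, because it has only two copies.
   Giving each member weight floor(r/2)/r is therefore admissible, so had_r G \<ge> t floor(r/2)/r,
   which is t/2 for even r and at least t/3 for every r \<ge> 2. *)

lemma has_K_minor_0: "has_K_minor V E 0"
  by (auto simp: has_K_minor_def)

lemma has_K_minor_le_card:
  assumes "finite V" and "has_K_minor V E t"
  shows "t \<le> card V"
proof -
  obtain B where B: "\<forall>i<t. B i \<subseteq> V \<and> connected_set E (B i)"
    and disj: "\<forall>i<t. \<forall>j<t. i \<noteq> j \<longrightarrow> B i \<inter> B j = {}"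
    using assms(2) unfolding has_K_minor_def by blast
  define f where "f i = (SOME x. x \<in> B i)" for i
  have f: "f i \<in> B i" if "i < t" for i
    using B that unfolding connected_set_def f_def by (metis some_in_eq)
  have "inj_on f {..<t}"
    using f disj unfolding inj_on_def by (metis disjoint_iff lessThan_iff)
  moreover have "f ` {..<t} \<subseteq> V"
    using f B by auto
  ultimately show ?thesis
    using card_inj_on_le[OF _ _ assms(1)] by fastforce
qed

lemma finite_K_minor_orders: "finite V \<Longrightarrow> finite {t. has_K_minor V E t}"
  by (rule finite_subset[of _ "{..card V}"]) (auto intro: has_K_minor_le_card)

lemma has_K_minor_had: "finite V \<Longrightarrow> has_K_minor V E (had V E)"
  unfolding had_def using Max_in[OF finite_K_minor_orders] has_K_minor_0 by blast

lemma le_had: "finite V \<Longrightarrow> has_K_minor V E t \<Longrightarrow> t \<le> had V E"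
  unfolding had_def by (simp add: finite_K_minor_orders)

lemma bramble_weight_sum_le_card:
  assumes "finite V" and "bramble V E \<B>" and "admissible_weight V \<B> w"
  shows "sum w \<B> \<le> real (card V)"
proof -
  have fin: "finite \<B>" and nonneg: "\<forall>X\<in>\<B>. w X \<ge> 0"
    and load: "\<forall>v\<in>V. (\<Sum>X\<in>{X\<in>\<B>. v \<in> fst X}. w X) \<le> 1"
    using assms(3) by (auto simp: admissible_weight_def)
  have elem: "fst X \<noteq> {} \<and> fst X \<subseteq> V" if "X \<in> \<B>" for X
    using assms(2) that unfolding bramble_def conn_subgraph_def by (cases X) auto
  have "w X \<le> (\<Sum>v\<in>V. if v \<in> fst X then w X else 0)" if X: "X \<in> \<B>" for X
  proof -
    obtain v where v: "v \<in> fst X" using elem X by blast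
    have "(if v \<in> fst X then w X else 0) \<le> (\<Sum>v\<in>V. if v \<in> fst X then w X else 0)"
      by (rule member_le_sum) (use v elem[OF X] X nonneg assms(1) in auto)
    then show ?thesis using v by simp
  qed
  then have "sum w \<B> \<le> (\<Sum>X\<in>\<B>. \<Sum>v\<in>V. if v \<in> fst X then w X else 0)"
    by (rule sum_mono)
  also have "\<dots> = (\<Sum>v\<in>V. \<Sum>X\<in>{X\<in>\<B>. v \<in> fst X}. w X)"
    using fin by (subst sum.swap) (simp add: sum.inter_filter)
  also have "\<dots> \<le> (\<Sum>v\<in>V. 1)"
    using load by (intro sum_mono) auto
  finally show ?thesis by simp
qed

lemma bdd_above_bramble_weights:
  "finite V \<Longrightarrow> bdd_above {h. \<exists>\<B> w. bramble V E \<B> \<and> admissible_weight V \<B> w \<and> h = sum w \<B>}"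
  unfolding bdd_above_def using bramble_weight_sum_le_card by blast

lemma empty_bramble_weight: "bramble V E {} \<and> admissible_weight V {} w"
  by (simp add: bramble_def admissible_weight_def)

lemma had_r_le_had_f:
  assumes "finite V"
  shows "had_r r V E \<le> had_f V E"
  unfolding had_r_def had_f_def
proof (rule cSup_subset_mono)
  show "bdd_above {h. \<exists>\<B> w. bramble V E \<B> \<and> admissible_weight V \<B> w \<and> h = sum w \<B>}"
    by (rule bdd_above_bramble_weights[OF assms])
qed (use empty_bramble_weight in fastforce)+

lemma bramble_weight_sum_le_had_r:
  assumes "finite V" and "bramble V E \<B>" and "admissible_weight V \<B> w"
    and "\<forall>X\<in>\<B>. \<exists>k::nat. w X = real k / real r"
  shows "sum w \<B> \<le> had_r r V E"
  unfolding had_r_def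
proof (rule cSup_upper)
  show "bdd_above {h. \<exists>\<B> w. bramble V E \<B> \<and> admissible_weight V \<B> w \<and>
      (\<forall>X\<in>\<B>. \<exists>k::nat. w X = real k / real r) \<and> h = sum w \<B>}"
    by (rule bdd_above_mono[OF bdd_above_bramble_weights[OF assms(1)]]) blast
qed (use assms in blast)

lemma multiplicity_weight:
  fixes Z :: "'i \<Rightarrow> 'a set \<times> ('a \<times> 'a) set" and q :: real
  assumes "finite I" and "q \<ge> 0"
    and load: "\<forall>v\<in>V. real (card {i\<in>I. v \<in> fst (Z i)}) * q \<le> 1"
  defines "w X \<equiv> real (card {i\<in>I. Z i = X}) * q"
  shows "admissible_weight V (Z ` I) w" and "sum w (Z ` I) = real (card I) * q"
proof -
  have fibres: "(\<Sum>X\<in>Z ` J. card {i\<in>J. Z i = X}) = card J" if "finite J" for J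
    using sum.image_gen[OF that, of "\<lambda>_. 1::nat" Z] by simp
  show "sum w (Z ` I) = real (card I) * q"
    unfolding w_def by (simp add: sum_distrib_right[symmetric] fibres[OF assms(1)] flip: of_nat_sum)
  have "(\<Sum>X\<in>{X\<in>Z ` I. v \<in> fst X}. w X) \<le> 1" if "v \<in> V" for v
  proof -
    define J where "J = {i\<in>I. v \<in> fst (Z i)}"
    have "{X\<in>Z ` I. v \<in> fst X} = Z ` J"
      unfolding J_def by auto
    moreover have "{i\<in>I. Z i = X} = {i\<in>J. Z i = X}" if "X \<in> Z ` J" for X
      using that unfolding J_def by auto
    ultimately have "(\<Sum>X\<in>{X\<in>Z ` I. v \<in> fst X}. w X) = real (card J) * q"
      unfolding w_def using assms(1) fibres[of J]
      by (simp add: sum_distrib_right[symmetric] J_def flip: of_nat_sum cong: sum.cong)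
    then show ?thesis
      using load that unfolding J_def by simp
  qed
  then show "admissible_weight V (Z ` I) w"
    unfolding admissible_weight_def w_def using assms(1,2) by simp
qed

lemma rtrancl_prodK2_fst:
  assumes "(p, q) \<in> (prodK2_E V E \<inter> (S \<times> S))\<^sup>*"
  shows "(fst p, fst q) \<in> (E \<inter> (fst ` S \<times> fst ` S))\<^sup>*"
  using assms
proof (induction rule: rtrancl_induct)
  case (step y z)
  then have "y \<in> S" "z \<in> S" and "fst y = fst z \<or> (fst y, fst z) \<in> E"
    by (auto simp: prodK2_E_def)
  then show ?case
    using step.IH by (auto intro: rtrancl_into_rtrancl)
qed simp

definition projection_subgraph :: "('a \<times> 'a) set \<Rightarrow> ('a \<times> bool) set \<Rightarrow> 'a set \<times> ('a \<times> 'a) set" where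
  "projection_subgraph E S = (fst ` S, E \<inter> (fst ` S \<times> fst ` S))"

lemma conn_subgraph_projection:
  assumes "sym E" and "S \<subseteq> prodK2_V V" and "connected_set (prodK2_E V E) S"
  shows "conn_subgraph V E (projection_subgraph E S)"
proof -
  have "(x, y) \<in> (E \<inter> (fst ` S \<times> fst ` S))\<^sup>*" if "x \<in> fst ` S" "y \<in> fst ` S" for x y
    using that assms(3) rtrancl_prodK2_fst unfolding connected_set_def by fastforce
  moreover have "sym (E \<inter> (fst ` S \<times> fst ` S))"
    using assms(1) by (auto simp: sym_def)
  ultimately show ?thesis
    using assms(2,3) by (auto simp: conn_subgraph_def projection_subgraph_def prodK2_V_def connected_set_def)
qed

lemma touch_projection:
  assumes "S \<inter> T \<noteq> {} \<or> (\<exists>x\<in>S. \<exists>y\<in>T. (x, y) \<in> prodK2_E V E)"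
  shows "touch E (projection_subgraph E S) (projection_subgraph E T)"
  using assms by (force simp: touch_def projection_subgraph_def prodK2_E_def)

lemma card_disjoint_meeting_fibre_le_2:
  fixes B :: "'i \<Rightarrow> ('a \<times> bool) set"
  assumes "finite I" and "\<forall>i\<in>I. \<forall>j\<in>I. i \<noteq> j \<longrightarrow> B i \<inter> B j = {}"
  shows "card {i\<in>I. v \<in> fst ` B i} \<le> 2"
proof -
  have layer: "card {i\<in>I. (v, b) \<in> B i} \<le> 1" for b
    using assms by (simp add: card_le_Suc0_iff_eq) blast
  have "{i\<in>I. v \<in> fst ` B i} = {i\<in>I. (v, False) \<in> B i} \<union> {i\<in>I. (v, True) \<in> B i}"
    by (auto simp: image_iff; metis (full_types) fst_conv prod.collapse)
  then have "card {i\<in>I. v \<in> fst ` B i} \<le> card {i\<in>I. (v, False) \<in> B i} + card {i\<in>I. (v, True) \<in> B i}"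
    by (simp add: card_Un_le)
  then show ?thesis
    using layer[of False] layer[of True] by linarith
qed

lemma K_minor_prodK2_le_had_r:
  assumes "graph V E" and "has_K_minor (prodK2_V V) (prodK2_E V E) t"
  shows "real t * real (r div 2) / real r \<le> had_r r V E"
proof -
  obtain B where branch: "\<forall>i<t. B i \<subseteq> prodK2_V V \<and> connected_set (prodK2_E V E) (B i)"
    and disj: "\<forall>i<t. \<forall>j<t. i \<noteq> j \<longrightarrow> B i \<inter> B j = {}"
    and adj: "\<forall>i<t. \<forall>j<t. i \<noteq> j \<longrightarrow> (\<exists>x\<in>B i. \<exists>y\<in>B j. (x, y) \<in> prodK2_E V E)"
    using assms(2) unfolding has_K_minor_def by blast
  have "finite V" and "sym E"
    using assms(1) by (auto simp: graph_def)
  define Z where "Z i = projection_subgraph E (B i)" for i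
  define q where "q = real (r div 2) / real r"
  define w where "w X = real (card {i\<in>{..<t}. Z i = X}) * q" for X
  have "touch E (Z i) (Z j)" if "i < t" "j < t" for i j
    unfolding Z_def using that branch adj
    by (cases "i = j") (auto simp: connected_set_def intro!: touch_projection[where V = V])
  then have bramble: "bramble V E (Z ` {..<t})"
    unfolding bramble_def Z_def using conn_subgraph_projection[OF \<open>sym E\<close>] branch by auto
  have "q \<ge> 0"
    unfolding q_def by simp
  moreover have "2 * q \<le> 1"
  proof -
    have "real (2 * (r div 2)) \<le> real r"
      by (simp only: of_nat_le_iff)
    then show ?thesis
      unfolding q_def by (cases "r = 0") (auto simp: divide_le_eq)
  qed
  moreover have "card {i\<in>{..<t}. v \<in> fst (Z i)} \<le> 2" for v
    unfolding Z_def projection_subgraph_def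
    using card_disjoint_meeting_fibre_le_2[of "{..<t}" B] disj by simp
  ultimately have "\<forall>v\<in>V. real (card {i\<in>{..<t}. v \<in> fst (Z i)}) * q \<le> 1"
    by (metis (no_types, lifting) dual_order.trans mult_right_mono of_nat_le_iff of_nat_numeral)
  note weight = multiplicity_weight[OF finite_lessThan \<open>q \<ge> 0\<close> this, folded w_def]
  have "\<forall>X\<in>Z ` {..<t}. \<exists>k::nat. w X = real k / real r"
    unfolding w_def q_def by (metis of_nat_mult times_divide_eq_right)
  from bramble_weight_sum_le_had_r[OF \<open>finite V\<close> bramble weight(1) this]
  show ?thesis
    using weight(2) by (simp add: q_def)
qed

lemma is_path_vertices: "is_path V E p \<Longrightarrow> \<exists>xs. path_list V E xs \<and> fst p = set xs"
  by (auto simp: is_path_def path_sg_def)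

lemma is_path_fst_subset: "is_path V E p \<Longrightarrow> fst p \<noteq> {} \<and> fst p \<subseteq> V"
  using is_path_vertices by (fastforce simp: path_list_def)

lemma prodK2_E_vertical: "v \<in> V \<Longrightarrow> ((v, b), (v, \<not> b)) \<in> prodK2_E V E"
  by (auto simp: prodK2_E_def)

lemma path_layer_rtrancl:
  assumes "path_list V E xs" and "sym E" and "set xs \<times> {b} \<subseteq> C"
    and "x \<in> set xs" and "y \<in> set xs"
  shows "((x, b), (y, b)) \<in> (prodK2_E V E \<inter> (C \<times> C))\<^sup>*"
proof -
  define R where "R = prodK2_E V E \<inter> (C \<times> C)"
  have edge: "((xs ! k, b), (xs ! Suc k, b)) \<in> R \<and> ((xs ! Suc k, b), (xs ! k, b)) \<in> R"
    if "Suc k < length xs" for k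
  proof -
    have "(xs ! k, xs ! Suc k) \<in> E"
      using assms(1) that by (simp add: path_list_def)
    then show ?thesis
      using assms(2,3) that unfolding R_def by (auto simp: prodK2_E_def dest: symD)
  qed
  have "((xs ! 0, b), (xs ! k, b)) \<in> R\<^sup>* \<and> ((xs ! k, b), (xs ! 0, b)) \<in> R\<^sup>*" if "k < length xs" for k
    using that
  proof (induction k)
    case (Suc k)
    then show ?case
      using edge[OF Suc.prems] by (meson Suc_lessD rtrancl_into_rtrancl converse_rtrancl_into_rtrancl)
  qed simp
  moreover obtain i j where "x = xs ! i" "y = xs ! j" "i < length xs" "j < length xs"
    using assms(4,5) by (metis in_set_conv_nth)
  ultimately show ?thesis
    unfolding R_def by (meson rtrancl_trans)
qed

definition lift_paths ::
    "('a set \<times> ('a \<times> 'a) set) set \<Rightarrow> ('a set \<times> ('a \<times> 'a) set) set \<Rightarrow> ('a \<times> bool) set" where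
  "lift_paths A Q = (\<Union>p\<in>Q. fst p \<times> {p \<notin> A})"

lemma inter_E_common_vertex: "(p, q) \<in> inter_E P \<Longrightarrow> \<exists>v. v \<in> fst p \<and> v \<in> fst q"
  unfolding inter_E_def by auto

lemma connected_lift_paths:
  assumes "sym E" and paths: "\<forall>p\<in>P. is_path V E p"
    and bip: "\<forall>(p, q)\<in>inter_E P. p \<in> A \<longleftrightarrow> q \<notin> A"
    and "Q \<subseteq> P" and conn: "connected_set (inter_E P) Q"
  shows "connected_set (prodK2_E V E) (lift_paths A Q)"
proof -
  define R where "R = prodK2_E V E \<inter> (lift_paths A Q \<times> lift_paths A Q)"
  have along: "((x, p \<notin> A), (y, p \<notin> A)) \<in> R\<^sup>*" if "p \<in> Q" "x \<in> fst p" "y \<in> fst p" for p x y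
  proof -
    obtain xs where "path_list V E xs" "fst p = set xs"
      using is_path_vertices paths \<open>Q \<subseteq> P\<close> \<open>p \<in> Q\<close> by blast
    moreover have "set xs \<times> {p \<notin> A} \<subseteq> lift_paths A Q"
      using \<open>fst p = set xs\<close> \<open>p \<in> Q\<close> unfolding lift_paths_def by blast
    ultimately show ?thesis
      unfolding R_def using path_layer_rtrancl[OF _ \<open>sym E\<close>] that by simp
  qed
  have across: "\<forall>x\<in>fst p. \<forall>y\<in>fst q. ((x, p \<notin> A), (y, q \<notin> A)) \<in> R\<^sup>*"
    if "(p, q) \<in> (inter_E P \<inter> (Q \<times> Q))\<^sup>*" and "p \<in> Q" for p q
    using that(1)
  proof (induction rule: rtrancl_induct)
    case base
    then show ?case using along[OF \<open>p \<in> Q\<close>] by blast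
  next
    case (step q' q)
    then have "(q', q) \<in> inter_E P" "q' \<in> Q" "q \<in> Q" by auto
    obtain v where v: "v \<in> fst q'" "v \<in> fst q"
      using inter_E_common_vertex[OF \<open>(q', q) \<in> inter_E P\<close>] by blast
    have "v \<in> V"
      using v is_path_fst_subset paths \<open>Q \<subseteq> P\<close> \<open>q \<in> Q\<close> by blast
    moreover have "(v, q' \<notin> A) \<in> lift_paths A Q" "(v, q \<notin> A) \<in> lift_paths A Q"
      using v \<open>q' \<in> Q\<close> \<open>q \<in> Q\<close> unfolding lift_paths_def by blast+
    moreover have "(q \<notin> A) = (\<not> (q' \<notin> A))"
      using bip \<open>(q', q) \<in> inter_E P\<close> by blast
    ultimately have vertical: "((v, q' \<notin> A), (v, q \<notin> A)) \<in> R"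
      unfolding R_def using prodK2_E_vertical[OF \<open>v \<in> V\<close>, of "q' \<notin> A" E] by simp
    show ?case
    proof (intro ballI)
      fix x y assume "x \<in> fst p" "y \<in> fst q"
      have "((x, p \<notin> A), (v, q' \<notin> A)) \<in> R\<^sup>*"
        using step.IH \<open>x \<in> fst p\<close> v(1) by blast
      also have "((v, q' \<notin> A), (v, q \<notin> A)) \<in> R\<^sup>*"
        using vertical by blast
      also have "((v, q \<notin> A), (y, q \<notin> A)) \<in> R\<^sup>*"
        using along[OF \<open>q \<in> Q\<close> v(2) \<open>y \<in> fst q\<close>] .
      finally show "((x, p \<notin> A), (y, q \<notin> A)) \<in> R\<^sup>*" .
    qed
  qed
  have "lift_paths A Q \<noteq> {}"
  proof -
    obtain p where "p \<in> Q"
      using conn unfolding connected_set_def by blast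
    moreover then obtain x where "x \<in> fst p"
      using is_path_fst_subset paths \<open>Q \<subseteq> P\<close> by blast
    ultimately show ?thesis
      unfolding lift_paths_def by blast
  qed
  moreover have "(x, y) \<in> R\<^sup>*" if xy: "x \<in> lift_paths A Q" "y \<in> lift_paths A Q" for x y
  proof -
    obtain p q where "p \<in> Q" "x \<in> fst p \<times> {p \<notin> A}" "q \<in> Q" "y \<in> fst q \<times> {q \<notin> A}"
      using xy unfolding lift_paths_def by blast
    then have "x = (fst x, p \<notin> A)" "fst x \<in> fst p" "y = (fst y, q \<notin> A)" "fst y \<in> fst q"
      by auto
    moreover have "(p, q) \<in> (inter_E P \<inter> (Q \<times> Q))\<^sup>*"
      using conn \<open>p \<in> Q\<close> \<open>q \<in> Q\<close> unfolding connected_set_def by blast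
    ultimately show ?thesis
      using across[OF _ \<open>p \<in> Q\<close>] by metis
  qed
  ultimately show ?thesis
    unfolding connected_set_def R_def by blast
qed

lemma grid_like_minor_K_minor_prodK2:
  assumes "graph V E" and "grid_like_minor V E P t"
  shows "has_K_minor (prodK2_V V) (prodK2_E V E) t"
proof -
  have "sym E"
    using assms(1) by (simp add: graph_def)
  have paths: "\<forall>p\<in>P. is_path V E p" and "bipartite P (inter_E P)"
    and "has_K_minor P (inter_E P) t"
    using assms(2) by (auto simp: grid_like_minor_def)
  obtain A where bip: "\<forall>(p, q)\<in>inter_E P. p \<in> A \<longleftrightarrow> q \<notin> A"
    using \<open>bipartite P (inter_E P)\<close> unfolding bipartite_def by blast
  obtain B where branch: "\<forall>i<t. B i \<subseteq> P \<and> connected_set (inter_E P) (B i)"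
    and disj: "\<forall>i<t. \<forall>j<t. i \<noteq> j \<longrightarrow> B i \<inter> B j = {}"
    and adj: "\<forall>i<t. \<forall>j<t. i \<noteq> j \<longrightarrow> (\<exists>p\<in>B i. \<exists>q\<in>B j. (p, q) \<in> inter_E P)"
    using \<open>has_K_minor P (inter_E P) t\<close> unfolding has_K_minor_def by blast
  define C where "C i = lift_paths A (B i)" for i
  have "C i \<subseteq> prodK2_V V" if "i < t" for i
  proof -
    have "\<forall>p\<in>B i. fst p \<subseteq> V"
      using is_path_fst_subset paths branch \<open>i < t\<close> by blast
    then show ?thesis
      unfolding C_def lift_paths_def prodK2_V_def by blast
  qed
  moreover have "connected_set (prodK2_E V E) (C i)" if "i < t" for i
    unfolding C_def using connected_lift_paths[OF \<open>sym E\<close> paths bip] branch that by blast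
  moreover have "C i \<inter> C j = {}" if ij: "i < t" "j < t" "i \<noteq> j" for i j
  proof (rule ccontr)
    assume "C i \<inter> C j \<noteq> {}"
    then obtain p q v where "p \<in> B i" "q \<in> B j" "v \<in> fst p" "v \<in> fst q" "(p \<notin> A) = (q \<notin> A)"
      unfolding C_def lift_paths_def by blast
    moreover have "p \<noteq> q" "p \<in> P" "q \<in> P"
      using \<open>p \<in> B i\<close> \<open>q \<in> B j\<close> disj branch ij by blast+
    ultimately have "(p, q) \<in> inter_E P"
      unfolding inter_E_def by blast
    then show False
      using bip \<open>(p \<notin> A) = (q \<notin> A)\<close> by blast
  qed
  moreover have "\<exists>x\<in>C i. \<exists>y\<in>C j. (x, y) \<in> prodK2_E V E" if ij: "i < t" "j < t" "i \<noteq> j" for i j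
  proof -
    obtain p q where "p \<in> B i" "q \<in> B j" "(p, q) \<in> inter_E P"
      using adj ij by blast
    moreover obtain v where "v \<in> fst p" "v \<in> fst q"
      using inter_E_common_vertex[OF \<open>(p, q) \<in> inter_E P\<close>] by blast
    moreover have "v \<in> V"
      using \<open>v \<in> fst p\<close> \<open>p \<in> B i\<close> is_path_fst_subset paths branch ij(1) by blast
    moreover have "(q \<notin> A) = (\<not> (p \<notin> A))"
      using bip \<open>(p, q) \<in> inter_E P\<close> by blast
    ultimately have "((v, p \<notin> A), (v, q \<notin> A)) \<in> prodK2_E V E"
      using prodK2_E_vertical[of v V "p \<notin> A" E] by simp
    moreover have "(v, p \<notin> A) \<in> C i" "(v, q \<notin> A) \<in> C j"
      unfolding C_def lift_paths_def using \<open>p \<in> B i\<close> \<open>q \<in> B j\<close> \<open>v \<in> fst p\<close> \<open>v \<in> fst q\<close> by blast+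
    ultimately show ?thesis
      by blast
  qed
  ultimately show ?thesis
    unfolding has_K_minor_def by (intro exI[of _ C]) blast
qed

lemma glm_le_had_prodK2:
  assumes "graph V E"
  shows "glm V E \<le> had (prodK2_V V) (prodK2_E V E)"
proof -
  have "finite (prodK2_V V)"
    using assms by (simp add: graph_def prodK2_V_def)
  then have bound: "t \<le> had (prodK2_V V) (prodK2_E V E)" if "grid_like_minor V E P t" for P t
    using le_had grid_like_minor_K_minor_prodK2[OF assms that] by blast
  have "grid_like_minor V E {} 0"
    by (simp add: grid_like_minor_def bipartite_def inter_E_def has_K_minor_0)
  moreover have "finite {t. \<exists>P. grid_like_minor V E P t}"
    by (rule finite_subset[of _ "{..had (prodK2_V V) (prodK2_E V E)}"]) (use bound in auto)
  ultimately show ?thesis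
    unfolding glm_def using bound by (subst Max_le_iff) auto
qed

theorem lemma20:
  fixes V :: "'a set" and E :: "('a \<times> 'a) set" and r :: nat
  assumes "graph V E" and "r \<ge> 2"
  shows "glm V E \<le> had (prodK2_V V) (prodK2_E V E)
         \<and> real (had (prodK2_V V) (prodK2_E V E)) \<le> 3 * had_r r V E
         \<and> (even r \<longrightarrow>
              real (had (prodK2_V V) (prodK2_E V E)) \<le> 2 * had_r r V E
              \<and> 2 * had_r r V E \<le> 2 * had_f V E)"
proof -
  define h where "h = had (prodK2_V V) (prodK2_E V E)"
  have "finite V"
    using assms(1) by (simp add: graph_def)
  then have "has_K_minor (prodK2_V V) (prodK2_E V E) h"
    unfolding h_def prodK2_V_def by (simp add: has_K_minor_had)
  then have bound: "real h * real (r div 2) / real r \<le> had_r r V E"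
    by (rule K_minor_prodK2_le_had_r[OF assms(1)])
  have "real h \<le> 3 * had_r r V E"
  proof -
    have "r \<le> 3 * (r div 2)"
      using assms(2) by linarith
    then have "real r \<le> 3 * real (r div 2)"
      by (metis of_nat_le_iff of_nat_mult of_nat_numeral)
    then have "real h * real r \<le> real h * (3 * real (r div 2))"
      by (rule mult_left_mono) simp
    then have "real h \<le> 3 * (real h * real (r div 2) / real r)"
      using assms(2) by (simp add: field_simps)
    then show ?thesis
      using bound by linarith
  qed
  moreover have "real h \<le> 2 * had_r r V E" if "even r"
    using bound that assms(2) by (auto elim!: evenE)
  ultimately show ?thesis
    using glm_le_had_prodK2[OF assms(1)] had_r_le_had_f[OF \<open>finite V\<close>]
    unfolding h_def by simp
qed

end
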